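(* Let $a_1\in\mathbb{R}$, $0<\varepsilon<1$, $T=1+\varepsilon$, and $(y,x_0)\in M^2=\mathbb{R}\times L^2(-1,0)$. Put $\widetilde{x}(t)=y+a_1\int_0^t x_0(\tau-1)\,d\tau$ for $t\in[0,1]$. Then $\mathcal{U}_T(y,x_0)$ is exactly the set of functions $u\in L^2(0,T)$ of the form (almost everywhere) $$u(t)=\begin{cases} u_0(t), & t\in[0,\varepsilon),\\ -a_1x_0(t-1), & t\in[\varepsilon,1),\\ -a_1\Big(\widetilde{x}(t-1)+\int_0^{t-1}u_0(\tau)\,d\tau\Big), & t\in[1,1+\varepsilon),\end{cases}$$ where $u_0$ ranges over all functions in $L^2(0,\varepsilon)$ satisfying $\int_0^\varepsilon u_0(\tau)\,d\tau=-\widetilde{x}(\varepsilon)$.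
   Context: Consider the scalar retarded control equation $\dot x(t)=a_1x(t-1)+u(t)$, $t\ge0$, with control $u\in L^2_{loc}(0,\infty)$ and initial data $x(0)=y$, $x(t)=x_0(t)$ for $t\in[-1,0)$, where $(y,x_0)\in M^2=\mathbb{R}\times L^2(-1,0)$. For every such initial state and control there is a unique continuous solution $x(t)=x(t;y,x_0,u)$ on $[0,\infty)$ (absolutely continuous, satisfying the equation a.e.). For $T>1$, the set of admissible controls $\mathcal{U}_T(y,x_0)$ is the set of $u\in L^2(0,T)$ such that $x(t;y,x_0,u)=0$ for all $t\in[T-1,T]$. *)

theory Defs
  imports "HOL-Analysis.Analysis"
begin

definition L2_on :: "real set \<Rightarrow> (real \<Rightarrow> real) \<Rightarrow> bool" where
  "L2_on A f \<longleftrightarrow> set_borel_measurable lborel A f \<and>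
                  set_integrable lborel A (\<lambda>t. (f t)\<^sup>2)"

definition hist_ext :: "(real \<Rightarrow> real) \<Rightarrow> (real \<Rightarrow> real) \<Rightarrow> real \<Rightarrow> real" where
  "hist_ext x0 x s = (if s < 0 then x0 s else x s)"

text \<open>x is a solution on [0,T] of  x'(t) = a1 x(t-1) + u(t),  x(0)=y, x = x0 on [-1,0):
  continuous on [0,T] and satisfies the equivalent integral equation
  (absolutely continuous + equation a.e.).\<close>
definition is_solution ::
  "real \<Rightarrow> real \<Rightarrow> real \<Rightarrow> (real \<Rightarrow> real) \<Rightarrow> (real \<Rightarrow> real) \<Rightarrow> (real \<Rightarrow> real) \<Rightarrow> bool" where
  "is_solution a1 T y x0 u x \<longleftrightarrow>
     continuous_on {0..T} x \<and>
     (\<forall>t\<in>{0..T}.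
        set_integrable lborel {0..t} (\<lambda>s. a1 * hist_ext x0 x (s - 1) + u s) \<and>
        x t = y + (LINT s:{0..t}|lborel. a1 * hist_ext x0 x (s - 1) + u s))"

definition admissible ::
  "real \<Rightarrow> real \<Rightarrow> real \<Rightarrow> (real \<Rightarrow> real) \<Rightarrow> (real \<Rightarrow> real) \<Rightarrow> bool" where
  "admissible a1 T y x0 u \<longleftrightarrow>
     L2_on {0..T} u \<and>
     (\<exists>x. is_solution a1 T y x0 u x \<and> (\<forall>t\<in>{T-1..T}. x t = 0))"

end

theory Submission
  imports Defs
begin

text \<open>On [0, \<epsilon>] the delayed term only sees the initial history, so there every trajectory
  equals xt plus the integral of u. A trajectory vanishes on [\<epsilon>, 1 + \<epsilon>] iff it vanishes at \<epsilon>
  and the integrand a1 x(t - 1) + u(t) of the integral equation vanishes a.e. on (\<epsilon>, 1 + \<epsilon>],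
  because an integrable function whose indefinite integral is constant vanishes a.e. As
  t - 1 \<in> (\<epsilon> - 1, \<epsilon>], this is the stated feedback law for u, with u0 = u on [0, \<epsilon>). Conversely,
  for such a control the function equal to xt plus the integral of u up to \<epsilon> and to 0 afterwards
  is an admissible trajectory.\<close>

text \<open>The densities of the positive and negative parts of g agree on all half-lines, hence coincide.\<close>

lemma AE_zero_if_set_integral_Ioi_zero:
  fixes g :: "real \<Rightarrow> real"
  assumes g: "integrable lborel g" and zero: "\<And>x. (LINT s:{x<..}|lborel. g s) = 0"
  shows "AE s in lborel. g s = 0"
proof -
  have [measurable]: "g \<in> borel_measurable borel"
    using g by (simp add: borel_measurable_integrable)
  have "emeasure (density lborel (\<lambda>s. ennreal (g s))) {x<..} =
        emeasure (density lborel (\<lambda>s. ennreal (- g s))) {x<..}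
      \<and> emeasure (density lborel (\<lambda>s. ennreal (- g s))) {x<..} < \<infinity>" for x
  proof -
    have "integrable lborel (\<lambda>s. indicator {x<..} s * g s)"
      using integrable_mult_indicator[OF _ g, of "{x<..}"] by simp
    then obtain r q where "(\<integral>\<^sup>+s. ennreal (indicator {x<..} s * g s) \<partial>lborel) = ennreal r"
      "(\<integral>\<^sup>+s. ennreal (- (indicator {x<..} s * g s)) \<partial>lborel) = ennreal q"
      "(\<integral>s. indicator {x<..} s * g s \<partial>lborel) = r - q"
      by (rule integrableE)
    moreover have "(\<integral>s. indicator {x<..} s * g s \<partial>lborel) = 0"
      using zero[of x] by (simp add: set_lebesgue_integral_def)
    moreover have "emeasure (density lborel (\<lambda>s. ennreal (f s))) {x<..} =
        (\<integral>\<^sup>+s. ennreal (indicator {x<..} s * f s) \<partial>lborel)" if [measurable]: "f \<in> borel_measurable borel" for f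
      by (subst emeasure_density) (auto intro!: nn_integral_cong simp: indicator_def)
    ultimately show ?thesis by simp
  qed
  then have "density lborel (\<lambda>s. ennreal (g s)) = density lborel (\<lambda>s. ennreal (- g s))"
    by (intro measure_eqI_lessThan) auto
  then have "AE s in lborel. ennreal (g s) = ennreal (- g s)"
    by (intro sigma_finite_measure.density_unique[OF sigma_finite_lborel]) auto
  then show ?thesis
    by eventually_elim (smt (verit) ennreal_eq_0_iff)
qed

lemma set_integral_Icc_split:
  fixes h :: "real \<Rightarrow> real"
  assumes h: "set_integrable lborel {a..b} h" and "a \<le> c" "c \<le> b"
  shows "(LINT s:{a..b}|lborel. h s) = (LINT s:{a..c}|lborel. h s) + (LINT s:{c<..b}|lborel. h s)"
proof -
  have "{a..b} = {a..c} \<union> {c<..b}" using assms(2,3) by auto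
  moreover have "set_integrable lborel {a..c} h" "set_integrable lborel {c<..b} h"
    using assms by (auto intro: set_integrable_subset[OF h])
  moreover have "{a..c} \<inter> {c<..b} = {}" by auto
  ultimately show ?thesis
    by (metis set_integral_Un)
qed

lemma set_integral_Icc_constant_iff_AE_zero:
  fixes h :: "real \<Rightarrow> real"
  assumes h: "set_integrable lborel {a..b} h" and c: "a \<le> c" "c \<le> b"
  shows "(\<forall>t\<in>{c..b}. (LINT s:{a..t}|lborel. h s) = (LINT s:{a..c}|lborel. h s)) \<longleftrightarrow>
         (AE s in lborel. s \<in> {c<..b} \<longrightarrow> h s = 0)"
    (is "?constant \<longleftrightarrow> ?AE")
proof -
  have increment: "(LINT s:{r<..t}|lborel. h s) = (LINT s:{a..t}|lborel. h s) - (LINT s:{a..r}|lborel. h s)"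
    if "a \<le> r" "r \<le> t" "t \<le> b" for r t
  proof -
    have "set_integrable lborel {a..t} h"
      using that by (intro set_integrable_subset[OF h]) auto
    from set_integral_Icc_split[OF this that(1,2)] show ?thesis by simp
  qed
  show ?thesis
  proof
    assume const: ?constant
    have "AE s in lborel. indicator {c<..b} s * h s = 0"
    proof (rule AE_zero_if_set_integral_Ioi_zero)
      have "set_integrable lborel {c<..b} h"
        using c by (intro set_integrable_subset[OF h]) auto
      then show "integrable lborel (\<lambda>s. indicator {c<..b} s * h s)"
        by (simp add: set_integrable_def)
      fix x
      show "(LINT s:{x<..}|lborel. indicator {c<..b} s * h s) = 0"
      proof (cases "x < b")
        case True
        then have r: "max c x \<in> {c..b}" using c by simp
        have "(LINT s:{x<..}|lborel. indicator {c<..b} s * h s) = (LINT s:{max c x<..b}|lborel. h s)"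
          unfolding set_lebesgue_integral_def
          by (intro Bochner_Integration.integral_cong) (auto simp: indicator_def)
        also have "\<dots> = 0"
          using increment[of "max c x" b] bspec[OF const r] bspec[OF const, of b] r c by simp
        finally show ?thesis .
      next
        case False
        then have "(\<lambda>s. indicator {x<..} s *\<^sub>R (indicator {c<..b} s * h s)) = (\<lambda>s. 0)"
          by (auto simp: indicator_def fun_eq_iff)
        then show ?thesis by (simp add: set_lebesgue_integral_def)
      qed
    qed
    then show ?AE
      by eventually_elim (auto simp: indicator_def split: if_splits)
  next
    assume ae: ?AE
    show ?constant
    proof
      fix t assume t: "t \<in> {c..b}"
      have "AE s in lborel. indicator {c<..t} s *\<^sub>R h s = 0"
        using ae by eventually_elim (use t in \<open>auto simp: indicator_def\<close>)
      then have "(LINT s:{c<..t}|lborel. h s) = 0"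
        unfolding set_lebesgue_integral_def by (rule integral_eq_zero_AE)
      then show "(LINT s:{a..t}|lborel. h s) = (LINT s:{a..c}|lborel. h s)"
        using increment[of c t] t c by simp
    qed
  qed
qed

lemma set_integral_cong_AE_integrable:
  fixes f g :: "'a \<Rightarrow> real"
  assumes "set_integrable M A f" "set_integrable M A g" "AE x in M. x \<in> A \<longrightarrow> f x = g x"
  shows "(LINT x:A|M. f x) = (LINT x:A|M. g x)"
  unfolding set_lebesgue_integral_def
  using assms unfolding set_integrable_def
  by (intro integral_cong_AE) (auto simp: borel_measurable_integrable)

lemma set_integrable_translate:
  fixes f :: "real \<Rightarrow> real"
  assumes "set_integrable lborel A f"
  shows "set_integrable lborel {s. s - c \<in> A} (\<lambda>s. f (s - c))"
proof -
  have "integrable lborel (\<lambda>s. (\<lambda>x. indicator A x *\<^sub>R f x) (- c + 1 * s))"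
    using assms unfolding set_integrable_def by (subst lborel_integrable_real_affine_iff) auto
  then show ?thesis
    unfolding set_integrable_def by (simp add: indicator_def)
qed

lemma continuous_on_indefinite_set_integral:
  fixes f :: "real \<Rightarrow> real"
  assumes "set_integrable lborel {a..b} f"
  shows "continuous_on {a..b} (\<lambda>t. LINT s:{a..t}|lborel. f s)"
proof -
  have "continuous_on {a..b} (\<lambda>t. integral {a..t} f)"
    using set_borel_integral_eq_integral(1)[OF assms] by (rule indefinite_integral_continuous_1)
  moreover have "integral {a..t} f = (LINT s:{a..t}|lborel. f s)" if "t \<in> {a..b}" for t
    using that by (intro set_borel_integral_eq_integral(2)[symmetric] set_integrable_subset[OF assms]) auto
  ultimately show ?thesis by (rule continuous_on_eq)
qed

lemma L2_on_subset:
  assumes "L2_on A f" "B \<in> sets lborel" "B \<subseteq> A"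
  shows "L2_on B f"
  using assms set_borel_measurable_subset set_integrable_subset unfolding L2_on_def by metis

lemma set_integrable_if_L2_on:
  assumes "L2_on A f" "A \<in> sets lborel" "emeasure lborel A < \<infinity>"
  shows "set_integrable lborel A f"
proof (rule set_integrable_bound[where f="\<lambda>s. 1 + (f s)\<^sup>2"])
  have "set_integrable lborel A (\<lambda>s. 1::real)"
    unfolding set_integrable_def using assms(2,3) by simp
  then show "set_integrable lborel A (\<lambda>s. 1 + (f s)\<^sup>2)"
    using assms(1) unfolding L2_on_def by (intro set_integral_add(1)) auto
  show "set_borel_measurable lborel A f" using assms(1) unfolding L2_on_def by simp
  have "\<bar>r\<bar> \<le> 1 + r\<^sup>2" for r :: real
    using zero_le_power2[of "\<bar>r\<bar> - 1"] by (simp add: power2_eq_square algebra_simps)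
  then show "AE s in lborel. s \<in> A \<longrightarrow> norm (f s) \<le> norm (1 + (f s)\<^sup>2)" by auto
qed

lemma set_integrable_delayed_hist_ext:
  fixes x0 x :: "real \<Rightarrow> real"
  assumes x0: "set_integrable lborel {0..<1} (\<lambda>s. x0 (s - 1))" and x: "continuous_on {0..T} x"
  shows "set_integrable lborel {0..T} (\<lambda>s. hist_ext x0 x (s - 1))"
proof -
  have "set_integrable lborel ({0..T} \<inter> {..<1}) (\<lambda>s. x0 (s - 1))"
    by (rule set_integrable_subset[OF x0]) auto
  moreover have "set_integrable lborel ({0..T} \<inter> {..<1}) (\<lambda>s. hist_ext x0 x (s - 1)) =
      set_integrable lborel ({0..T} \<inter> {..<1}) (\<lambda>s. x0 (s - 1))"
    by (rule set_integrable_cong) (auto simp: hist_ext_def)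
  moreover have "continuous_on {1..T} (\<lambda>s. x (s - 1))"
    by (rule continuous_on_compose2[OF x continuous_on_diff[OF continuous_on_id continuous_on_const]]) auto
  then have "set_integrable lborel {1..T} (\<lambda>s. x (s - 1))"
    unfolding set_integrable_def by (intro borel_integrable_compact) auto
  moreover have "set_integrable lborel {1..T} (\<lambda>s. hist_ext x0 x (s - 1)) =
      set_integrable lborel {1..T} (\<lambda>s. x (s - 1))"
    by (rule set_integrable_cong) (auto simp: hist_ext_def)
  moreover have "{0..T} = ({0..T} \<inter> {..<1}) \<union> {1..T}" by auto
  ultimately show ?thesis
    by (metis set_integrable_Un sets_lborel atLeastAtMost_borel lessThan_borel sets.Int)
qed

lemma set_integral_hist_ext_before_delay:
  fixes x0 x u :: "real \<Rightarrow> real"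
  assumes "set_integrable lborel {0..t} (\<lambda>s. x0 (s - 1))" "set_integrable lborel {0..t} u" "t < 1"
  shows "(LINT s:{0..t}|lborel. a * hist_ext x0 x (s - 1) + u s) =
         a * (LINT s:{0..t}|lborel. x0 (s - 1)) + (LINT s:{0..t}|lborel. u s)"
proof -
  have "(LINT s:{0..t}|lborel. a * hist_ext x0 x (s - 1) + u s) =
        (LINT s:{0..t}|lborel. a * x0 (s - 1) + u s)"
    using \<open>t < 1\<close> by (intro set_lebesgue_integral_cong) (auto simp: hist_ext_def)
  also have "\<dots> = a * (LINT s:{0..t}|lborel. x0 (s - 1)) + (LINT s:{0..t}|lborel. u s)"
    using assms by simp
  finally show ?thesis .
qed

context
  fixes a1 \<epsilon> T y :: real and x0 u xt :: "real \<Rightarrow> real"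
  assumes eps: "0 < \<epsilon>" "\<epsilon> < 1" and T: "T = 1 + \<epsilon>"
    and x0: "L2_on {-1..<0} x0" and u: "L2_on {0..T} u"
    and xt: "xt = (\<lambda>t. y + a1 * (LINT \<tau>:{0..t}|lborel. x0 (\<tau> - 1)))"
begin

lemma delayed_initial_history_integrable: "set_integrable lborel {0..<1} (\<lambda>s. x0 (s - 1))"
proof -
  have "set_integrable lborel {-1..<0} x0"
    using x0 by (rule set_integrable_if_L2_on) auto
  moreover have "{s. s - 1 \<in> {-1..<0}} = {0..<1::real}" by auto
  ultimately show ?thesis
    by (metis set_integrable_translate)
qed

lemma control_integrable: "set_integrable lborel {0..T} u"
  using u by (rule set_integrable_if_L2_on) (use eps T in auto)

lemma trajectory_before_delay:
  assumes "t \<in> {0..\<epsilon>}"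
  shows "y + (LINT s:{0..t}|lborel. a1 * hist_ext x0 x (s - 1) + u s) = xt t + (LINT s:{0..t}|lborel. u s)"
proof -
  have "set_integrable lborel {0..t} (\<lambda>s. x0 (s - 1))"
    by (rule set_integrable_subset[OF delayed_initial_history_integrable]) (use assms eps in auto)
  moreover have "set_integrable lborel {0..t} u"
    by (rule set_integrable_subset[OF control_integrable]) (use assms eps T in auto)
  ultimately show ?thesis
    using assms eps xt by (simp add: set_integral_hist_ext_before_delay)
qed

lemma delay_equation_AE_iff_feedback:
  assumes early: "\<And>t. t \<in> {0..\<epsilon>} \<Longrightarrow> x t = xt t + (LINT s:{0..t}|lborel. u s)"
  shows "(AE s in lborel. s \<in> {\<epsilon><..T} \<longrightarrow> a1 * hist_ext x0 x (s - 1) + u s = 0) \<longleftrightarrow>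
         (AE s in lborel. s \<in> {\<epsilon><..T} \<longrightarrow>
            u s = - a1 * (if s < 1 then x0 (s - 1) else xt (s - 1) + (LINT \<tau>:{0..s-1}|lborel. u \<tau>)))"
proof -
  have pointwise: "a1 * hist_ext x0 x (s - 1) + u s = 0 \<longleftrightarrow>
      u s = - a1 * (if s < 1 then x0 (s - 1) else xt (s - 1) + (LINT \<tau>:{0..s-1}|lborel. u \<tau>))"
    if "s \<in> {\<epsilon><..T}" "s \<noteq> 1" for s
    using that early[of "s - 1"] T by (auto simp: hist_ext_def)
  show ?thesis
    by (rule eventually_cong[OF AE_lborel_singleton[of 1]]) (use pointwise in blast)
qed

lemma admissible_imp_feedback:
  assumes "admissible a1 T y x0 u"
  shows "xt \<epsilon> + (LINT s:{0..\<epsilon>}|lborel. u s) = 0"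
    and "AE s in lborel. s \<in> {\<epsilon><..T} \<longrightarrow>
           u s = - a1 * (if s < 1 then x0 (s - 1) else xt (s - 1) + (LINT \<tau>:{0..s-1}|lborel. u \<tau>))"
proof -
  obtain x where sol: "is_solution a1 T y x0 u x" and zero: "\<forall>t\<in>{T-1..T}. x t = 0"
    using assms unfolding admissible_def by blast
  let ?h = "\<lambda>s. a1 * hist_ext x0 x (s - 1) + u s"
  have h: "set_integrable lborel {0..T} ?h"
    and x_eq: "\<And>t. t \<in> {0..T} \<Longrightarrow> x t = y + (LINT s:{0..t}|lborel. ?h s)"
    using sol eps T unfolding is_solution_def by auto
  have early: "x t = xt t + (LINT s:{0..t}|lborel. u s)" if "t \<in> {0..\<epsilon>}" for t
    using x_eq[of t] trajectory_before_delay[OF that, of x] that T by auto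
  moreover have "x \<epsilon> = 0" using zero T by simp
  ultimately show "xt \<epsilon> + (LINT s:{0..\<epsilon>}|lborel. u s) = 0"
    using eps by simp
  have "\<forall>t\<in>{\<epsilon>..T}. (LINT s:{0..t}|lborel. ?h s) = (LINT s:{0..\<epsilon>}|lborel. ?h s)"
  proof
    fix t assume "t \<in> {\<epsilon>..T}"
    then show "(LINT s:{0..t}|lborel. ?h s) = (LINT s:{0..\<epsilon>}|lborel. ?h s)"
      using x_eq[of t] x_eq[of \<epsilon>] zero eps T by simp
  qed
  then have "AE s in lborel. s \<in> {\<epsilon><..T} \<longrightarrow> ?h s = 0"
    using set_integral_Icc_constant_iff_AE_zero[OF h] eps T by simp
  then show "AE s in lborel. s \<in> {\<epsilon><..T} \<longrightarrow>
           u s = - a1 * (if s < 1 then x0 (s - 1) else xt (s - 1) + (LINT \<tau>:{0..s-1}|lborel. u \<tau>))"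
    using delay_equation_AE_iff_feedback[OF early] by blast
qed

lemma feedback_imp_admissible:
  assumes init: "xt \<epsilon> + (LINT s:{0..\<epsilon>}|lborel. u s) = 0"
    and feedback: "AE s in lborel. s \<in> {\<epsilon><..T} \<longrightarrow>
           u s = - a1 * (if s < 1 then x0 (s - 1) else xt (s - 1) + (LINT \<tau>:{0..s-1}|lborel. u \<tau>))"
  shows "admissible a1 T y x0 u"
proof -
  define x where "x t = (if t \<le> \<epsilon> then xt t + (LINT s:{0..t}|lborel. u s) else 0)" for t
  have early: "\<And>t. t \<in> {0..\<epsilon>} \<Longrightarrow> x t = xt t + (LINT s:{0..t}|lborel. u s)"
    by (simp add: x_def)
  have late: "x t = 0" if "\<epsilon> \<le> t" for t
    using that init by (auto simp: x_def)
  have "continuous_on {0..\<epsilon>} (\<lambda>t. LINT s:{0..t}|lborel. x0 (s - 1))"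
    by (intro continuous_on_indefinite_set_integral set_integrable_subset[OF delayed_initial_history_integrable])
      (use eps in auto)
  moreover have "continuous_on {0..\<epsilon>} (\<lambda>t. LINT s:{0..t}|lborel. u s)"
    using set_integrable_subset[OF control_integrable, of "{0..\<epsilon>}"] T
    by (intro continuous_on_indefinite_set_integral) auto
  ultimately have "continuous_on {0..\<epsilon>}
      (\<lambda>t. y + a1 * (LINT s:{0..t}|lborel. x0 (s - 1)) + (LINT s:{0..t}|lborel. u s))"
    by (intro continuous_intros)
  then have "continuous_on {0..\<epsilon>} x"
    by (rule continuous_on_eq) (simp add: early xt)
  moreover have "continuous_on {\<epsilon>..T} x"
    by (rule continuous_on_eq[OF continuous_on_const]) (simp add: late)
  ultimately have "continuous_on ({0..\<epsilon>} \<union> {\<epsilon>..T}) x"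
    by (intro continuous_on_closed_Un) auto
  moreover have "{0..\<epsilon>} \<union> {\<epsilon>..T} = {0..T}" using eps T by auto
  ultimately have cont: "continuous_on {0..T} x" by simp
  let ?h = "\<lambda>s. a1 * hist_ext x0 x (s - 1) + u s"
  have h: "set_integrable lborel {0..T} ?h"
    using set_integrable_delayed_hist_ext[OF delayed_initial_history_integrable cont] control_integrable
    by simp
  have "AE s in lborel. s \<in> {\<epsilon><..T} \<longrightarrow> ?h s = 0"
    using delay_equation_AE_iff_feedback[OF early] feedback by blast
  moreover have "0 \<le> \<epsilon>" "\<epsilon> \<le> T" using eps T by auto
  ultimately have stationary: "\<forall>t\<in>{\<epsilon>..T}. (LINT s:{0..t}|lborel. ?h s) = (LINT s:{0..\<epsilon>}|lborel. ?h s)"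
    using set_integral_Icc_constant_iff_AE_zero[OF h] by blast
  have "x t = y + (LINT s:{0..t}|lborel. ?h s)" if "t \<in> {0..T}" for t
  proof (cases "t \<le> \<epsilon>")
    case True
    then have "t \<in> {0..\<epsilon>}" using that by simp
    from trajectory_before_delay[OF this, of x] early[OF this] show ?thesis by linarith
  next
    case False
    have "\<epsilon> \<in> {0..\<epsilon>}" "t \<in> {\<epsilon>..T}" using eps False that by auto
    from trajectory_before_delay[OF this(1), of x] early[OF this(1)] bspec[OF stationary this(2)]
      late[of t] False init
    show ?thesis by linarith
  qed
  moreover have "set_integrable lborel {0..t} ?h" if "t \<in> {0..T}" for t
    using that by (intro set_integrable_subset[OF h]) auto
  ultimately have "is_solution a1 T y x0 u x"
    using cont unfolding is_solution_def by blast
  then show ?thesis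
    unfolding admissible_def using u late T by auto
qed

lemma feedback_form_imp_admissible:
  assumes u0: "L2_on {0..\<epsilon>} u0"
    and init: "(LINT \<tau>:{0..\<epsilon>}|lborel. u0 \<tau>) = - xt \<epsilon>"
    and u_eq: "AE t in lborel. t \<in> {0..<T} \<longrightarrow>
           u t = (if t < \<epsilon> then u0 t else if t < 1 then - a1 * x0 (t - 1)
                  else - a1 * (xt (t - 1) + (LINT \<tau>:{0..t-1}|lborel. u0 \<tau>)))"
  shows "admissible a1 T y x0 u"
proof -
  have same_integral: "(LINT s:{0..r}|lborel. u s) = (LINT s:{0..r}|lborel. u0 s)" if "r \<in> {0..\<epsilon>}" for r
  proof (rule set_integral_cong_AE_integrable)
    show "set_integrable lborel {0..r} u"
      by (rule set_integrable_subset[OF control_integrable]) (use that T in auto)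
    show "set_integrable lborel {0..r} u0"
      by (rule set_integrable_subset[OF set_integrable_if_L2_on[OF u0]]) (use that in auto)
    show "AE s in lborel. s \<in> {0..r} \<longrightarrow> u s = u0 s"
      using u_eq AE_lborel_singleton[of \<epsilon>] by eventually_elim (use that T in auto)
  qed
  show ?thesis
  proof (rule feedback_imp_admissible)
    show "xt \<epsilon> + (LINT s:{0..\<epsilon>}|lborel. u s) = 0"
      using init same_integral[of \<epsilon>] eps by simp
  qed (use u_eq AE_lborel_singleton[of T] in \<open>eventually_elim, use same_integral eps T in auto\<close>)
qed

end

theorem mainTheorem1:
  fixes a1 \<epsilon> T y :: real and x0 u :: "real \<Rightarrow> real"
  assumes "0 < \<epsilon>" and "\<epsilon> < 1" and "T = 1 + \<epsilon>"
    and "L2_on {-1..<0} x0"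
  defines "xt \<equiv> (\<lambda>t. y + a1 * (LINT \<tau>:{0..t}|lborel. x0 (\<tau> - 1)))"
  shows "admissible a1 T y x0 u \<longleftrightarrow>
    (L2_on {0..T} u \<and>
     (\<exists>u0. L2_on {0..\<epsilon>} u0 \<and>
        (LINT \<tau>:{0..\<epsilon>}|lborel. u0 \<tau>) = - xt \<epsilon> \<and>
        (AE t in lborel. t \<in> {0..<T} \<longrightarrow>
           u t = (if t < \<epsilon> then u0 t
                  else if t < 1 then - a1 * x0 (t - 1)
                  else - a1 * (xt (t - 1) + (LINT \<tau>:{0..t-1}|lborel. u0 \<tau>))))))"
    (is "_ \<longleftrightarrow> ?characterization")
proof -
  have xt: "xt = (\<lambda>t. y + a1 * (LINT \<tau>:{0..t}|lborel. x0 (\<tau> - 1)))"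
    by (simp add: xt_def)
  show ?thesis
  proof
    assume adm: "admissible a1 T y x0 u"
    then have u: "L2_on {0..T} u" by (simp add: admissible_def)
    note feedback = admissible_imp_feedback[OF assms(1-4) u xt adm]
    show ?characterization
    proof (intro conjI exI)
      show "L2_on {0..T} u" "L2_on {0..\<epsilon>} u"
        using u assms(3) by (auto intro: L2_on_subset)
      show "(LINT \<tau>:{0..\<epsilon>}|lborel. u \<tau>) = - xt \<epsilon>"
        using feedback(1) by simp
    qed (use feedback(2) AE_lborel_singleton[of \<epsilon>] in \<open>eventually_elim, auto\<close>)
  next
    assume ?characterization
    then show "admissible a1 T y x0 u"
      by (blast intro: feedback_form_imp_admissible[OF assms(1-4) _ xt])
  qed
qed

end
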